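(* In the reset-button collector, for all complex $z$ with $|z|\le1$, \[\mathbb Ez^{T_n}=\frac{(1-q_nz)\phi_n(q_nz)}{1-z+\rho_nz\phi_n(q_nz)}.\] The same identity also holds, with finite value, for any real $z\ge0$ such that $q_nz<1$ and $1-z+\rho_nz\phi_n(q_nz)>0$.
   Context: Reset-button collector: fix $n\ge1$. There are standard coupons $1,\dots,n$ and a reset coupon. At each discrete time $t=1,2,\dots$ one coupon is sampled independently: the reset coupon with probability $\rho_n\in(0,1)$, standard coupon $i$ with probability $p_{i,n}>0$, where $\sum_ip_{i,n}=q_n:=1-\rho_n$. Starting from the empty collection, drawn standard coupons are added; a reset empties the collection and collecting continues. $T_n$ is the first time all $n$ standard coupons are present. $C_n$ is the ordinary coupon collector completion time (number of i.i.d. draws until all types seen) with type probabilities $\pi_{i,n}=p_{i,n}/q_n$, and $\phi_n(z)=\mathbb Ez^{C_n}$. *)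

theory Defs
  imports "HOL-Analysis.Analysis"
begin

text \<open>Coupon labels: 0 is the reset coupon, 1..n are the standard coupons.
  A realisation of the first t draws (times 1..t) is a function on {..<t}
  (index j corresponds to time j+1).\<close>

definition reset_collected :: "(nat \<Rightarrow> nat) \<Rightarrow> nat \<Rightarrow> nat set" where
  "reset_collected \<omega> k =
     {\<omega> j | j. j < k \<and> \<omega> j \<noteq> 0 \<and> (\<forall>l. j < l \<and> l < k \<longrightarrow> \<omega> l \<noteq> 0)}"

definition reset_first_complete :: "nat \<Rightarrow> (nat \<Rightarrow> nat) \<Rightarrow> nat \<Rightarrow> bool" where
  "reset_first_complete n \<omega> t \<longleftrightarrow>
     {1..n} \<subseteq> reset_collected \<omega> t \<and> (\<forall>s<t. \<not> {1..n} \<subseteq> reset_collected \<omega> s)"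

definition T_prob :: "nat \<Rightarrow> real \<Rightarrow> (nat \<Rightarrow> real) \<Rightarrow> nat \<Rightarrow> real" where
  "T_prob n \<rho> p t =
     (\<Sum>\<omega> \<in> {..<t} \<rightarrow>\<^sub>E {0..n}.
        (\<Prod>i<t. (if \<omega> i = 0 then \<rho> else p (\<omega> i))) *
        (if reset_first_complete n \<omega> t then 1 else 0))"

definition C_prob :: "nat \<Rightarrow> (nat \<Rightarrow> real) \<Rightarrow> nat \<Rightarrow> real" where
  "C_prob n \<pi> t =
     (\<Sum>\<omega> \<in> {..<t} \<rightarrow>\<^sub>E {1..n}.
        (\<Prod>i<t. \<pi> (\<omega> i)) *
        (if {1..n} \<subseteq> \<omega> ` {..<t} \<and> (\<forall>s<t. \<not> {1..n} \<subseteq> \<omega> ` {..<s}) then 1 else 0))"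

definition C_pgf :: "nat \<Rightarrow> (nat \<Rightarrow> real) \<Rightarrow> 'a::{real_normed_field,banach} \<Rightarrow> 'a" where
  "C_pgf n \<pi> w = (\<Sum>t. of_real (C_prob n \<pi> t) * w ^ t)"

end

theory Submission
  imports Defs
begin

text \<open>
  Split a run at its first reset. Either all coupons arrive before any reset, which is an
  ordinary collector run with the unnormalised weights \<open>p\<close>, or the first reset comes at time
  \<open>k\<close> after \<open>k - 1\<close> reset-free draws that did not complete the collection, and the process
  starts afresh. So \<open>a(t) = P(T_n = t)\<close> satisfies the renewal equation
  \<open>a(t) = c(t) + (\<Sum>k\<le>t. f(k) a(t - k))\<close> with \<open>c(t) = q^t P(C_n = t)\<close> and
  \<open>f(k) = \<rho> q^(k-1) P(C_n > k - 1)\<close>. In generating functions this reads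
  \<open>E z^T_n = \<phi>(qz) / (1 - \<rho> z G(qz))\<close>, where \<open>G(w) = \<Sum>m. P(C_n > m) w^m = (1 - \<phi>(w)) / (1 - w)\<close>,
  which is the claimed formula. Convergence also comes from the renewal equation: all
  coefficients are nonnegative, so the partial sums \<open>P\<close> of \<open>\<Sum>t. a(t) r^t\<close> satisfy
  \<open>P \<le> S + F P\<close> with \<open>F = \<Sum>k. f(k) r^k\<close>, and are bounded once \<open>F < 1\<close>. That condition is
  exactly the positivity of the denominator at \<open>r\<close>; at \<open>r = 1\<close> it says \<open>\<phi>(q) > 0\<close>.
\<close>

section \<open>Sums over finite function spaces\<close>

definition splice :: "nat \<Rightarrow> (nat \<Rightarrow> 'a) \<Rightarrow> 'a \<Rightarrow> (nat \<Rightarrow> 'a) \<Rightarrow> nat \<Rightarrow> 'a" where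
  "splice a u x y j = (if j < a then u j else if j = a then x else y (j - Suc a))"

lemma splice_simps [simp]:
  "j < a \<Longrightarrow> splice a u x y j = u j"
  "splice a u x y a = x"
  "splice a u x y (Suc (a + j)) = y j"
  by (simp_all add: splice_def)

lemma sum_PiE_splice:
  assumes "finite A"
  shows "(\<Sum>\<omega>\<in>{..<a + Suc m} \<rightarrow>\<^sub>E A. f \<omega>) =
         (\<Sum>u\<in>{..<a} \<rightarrow>\<^sub>E A. \<Sum>x\<in>A. \<Sum>y\<in>{..<m} \<rightarrow>\<^sub>E A. f (splice a u x y))"
proof -
  have "(\<Sum>u\<in>{..<a} \<rightarrow>\<^sub>E A. \<Sum>x\<in>A. \<Sum>y\<in>{..<m} \<rightarrow>\<^sub>E A. f (splice a u x y)) =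
        (\<Sum>(u, x, y)\<in>({..<a} \<rightarrow>\<^sub>E A) \<times> A \<times> ({..<m} \<rightarrow>\<^sub>E A). f (splice a u x y))"
    by (simp add: sum.cartesian_product)
  also have "\<dots> = (\<Sum>\<omega>\<in>{..<a + Suc m} \<rightarrow>\<^sub>E A. f \<omega>)"
    by (rule sum.reindex_bij_witness[where
          i = "\<lambda>\<omega>. (restrict \<omega> {..<a}, \<omega> a, \<lambda>j. if j < m then \<omega> (Suc a + j) else undefined)"
          and j = "\<lambda>(u, x, y). splice a u x y"])
       (auto simp: splice_def PiE_iff extensional_def fun_eq_iff)
  finally show ?thesis by simp
qed

lemma sum_PiE_fun_upd:
  assumes "finite A"
  shows "(\<Sum>\<omega>\<in>{..<Suc m} \<rightarrow>\<^sub>E A. f \<omega>) = (\<Sum>u\<in>{..<m} \<rightarrow>\<^sub>E A. \<Sum>x\<in>A. f (u(m := x)))"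
proof -
  have "(\<Sum>u\<in>{..<m} \<rightarrow>\<^sub>E A. \<Sum>x\<in>A. f (u(m := x))) = (\<Sum>(u, x)\<in>({..<m} \<rightarrow>\<^sub>E A) \<times> A. f (u(m := x)))"
    by (rule sum.cartesian_product)
  also have "\<dots> = (\<Sum>\<omega>\<in>{..<Suc m} \<rightarrow>\<^sub>E A. f \<omega>)"
    by (rule sum.reindex_bij_witness[where i = "\<lambda>\<omega>. (fun_upd \<omega> m undefined, \<omega> m)" and j = "\<lambda>(u, x). u(m := x)"])
       (auto simp: PiE_def extensional_def fun_eq_iff split: if_splits)
  finally show ?thesis by simp
qed

lemma prod_splice:
  "(\<Prod>i<a + Suc m. h (splice a u x y i)) = (\<Prod>i<a. h (u i)) * h x * (\<Prod>i<m. h (y i))"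
  by (induction m) (simp_all add: mult.assoc)

lemma sum_PiE_nonzero:
  fixes a n :: nat
  shows "(\<Sum>u\<in>{..<a} \<rightarrow>\<^sub>E {0..n}. if \<forall>j<a. u j \<noteq> 0 then g u else 0) = (\<Sum>u\<in>{..<a} \<rightarrow>\<^sub>E {1..n}. g u)"
proof -
  have nonzero_iff: "(\<forall>j<a. u j \<noteq> 0) \<longleftrightarrow> u \<in> {..<a} \<rightarrow>\<^sub>E {1..n}" if "u \<in> {..<a} \<rightarrow>\<^sub>E {0..n}" for u
    using that unfolding PiE_iff by (auto simp: Suc_le_eq)
  have "(\<Sum>u\<in>{..<a} \<rightarrow>\<^sub>E {0..n}. if \<forall>j<a. u j \<noteq> 0 then g u else 0) =
        (\<Sum>u\<in>{..<a} \<rightarrow>\<^sub>E {0..n}. if u \<in> {..<a} \<rightarrow>\<^sub>E {1..n} then g u else 0)"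
    by (rule sum.cong[OF refl]) (simp only: nonzero_iff)
  also have "\<dots> = sum g (({..<a} \<rightarrow>\<^sub>E {0..n}) \<inter> ({..<a} \<rightarrow>\<^sub>E {1..n}))"
    by (rule sum.inter_restrict[symmetric]) (simp add: finite_PiE)
  also have "({..<a} \<rightarrow>\<^sub>E {0..n}) \<inter> ({..<a} \<rightarrow>\<^sub>E {1..n}) = {..<a} \<rightarrow>\<^sub>E {1..n}"
    by (intro Int_absorb1 PiE_mono) auto
  finally show ?thesis .
qed

lemma sum_prod_PiE_eq_power: "finite A \<Longrightarrow> (\<Sum>\<omega>\<in>{..<m} \<rightarrow>\<^sub>E A. \<Prod>i<m. f (\<omega> i)) = (\<Sum>x\<in>A. f x) ^ m"
  for f :: "'a \<Rightarrow> 'b::comm_semiring_1"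
  using prod_sum_PiE[of "{..<m}" "\<lambda>_. A" "\<lambda>_ x. f x"] by simp


section \<open>The ordinary coupon collector\<close>

definition C_survival :: "nat \<Rightarrow> (nat \<Rightarrow> real) \<Rightarrow> nat \<Rightarrow> real" where
  "C_survival n \<pi> m =
     (\<Sum>\<omega> \<in> {..<m} \<rightarrow>\<^sub>E {1..n}. (\<Prod>i<m. \<pi> (\<omega> i)) * (if {1..n} \<subseteq> \<omega> ` {..<m} then 0 else 1))"

lemma not_covered_before_Suc_iff:
  "(\<forall>s<Suc m. \<not> A \<subseteq> \<omega> ` {..<s}) \<longleftrightarrow> \<not> A \<subseteq> \<omega> ` {..<m}"
proof
  assume "\<not> A \<subseteq> \<omega> ` {..<m}"
  moreover have "\<omega> ` {..<s} \<subseteq> \<omega> ` {..<m}" if "s < Suc m" for s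
    using that by (intro image_mono) auto
  ultimately show "\<forall>s<Suc m. \<not> A \<subseteq> \<omega> ` {..<s}"
    by blast
qed auto

lemma C_prob_divide: "C_prob n (\<lambda>i. \<pi> i / c) t = C_prob n \<pi> t / c ^ t"
  unfolding C_prob_def by (simp add: prod_dividef sum_divide_distrib)

lemma C_survival_divide: "C_survival n (\<lambda>i. \<pi> i / c) m = C_survival n \<pi> m / c ^ m"
  unfolding C_survival_def by (simp add: prod_dividef sum_divide_distrib)

lemma C_prob_0: "n \<ge> 1 \<Longrightarrow> C_prob n \<pi> 0 = 0"
  by (simp add: C_prob_def)

lemma C_survival_0: "n \<ge> 1 \<Longrightarrow> C_survival n \<pi> 0 = 1"
  by (simp add: C_survival_def)

lemma C_prob_Suc_add_C_survival_Suc: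
  "C_prob n \<pi> (Suc m) + C_survival n \<pi> (Suc m) = (\<Sum>i=1..n. \<pi> i) * C_survival n \<pi> m"
proof -
  have completion_split:
    "(if {1..n} \<subseteq> \<omega> ` {..<Suc m} \<and> (\<forall>s<Suc m. \<not> {1..n} \<subseteq> \<omega> ` {..<s}) then 1 else 0) +
     (if {1..n} \<subseteq> \<omega> ` {..<Suc m} then 0 else 1) = (if {1..n} \<subseteq> \<omega> ` {..<m} then 0 else 1 :: real)"
    for \<omega> :: "nat \<Rightarrow> nat"
    using image_mono[of "{..<m}" "{..<Suc m}" \<omega>] unfolding not_covered_before_Suc_iff by auto
  have "C_prob n \<pi> (Suc m) + C_survival n \<pi> (Suc m) =
        (\<Sum>\<omega>\<in>{..<Suc m} \<rightarrow>\<^sub>E {1..n}. (\<Prod>i<Suc m. \<pi> (\<omega> i)) * (if {1..n} \<subseteq> \<omega> ` {..<m} then 0 else 1))"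
    unfolding C_prob_def C_survival_def sum.distrib[symmetric] distrib_left[symmetric] completion_split ..
  also have "\<dots> = (\<Sum>u\<in>{..<m} \<rightarrow>\<^sub>E {1..n}. \<Sum>x\<in>{1..n}.
                   \<pi> x * ((\<Prod>i<m. \<pi> (u i)) * (if {1..n} \<subseteq> u ` {..<m} then 0 else 1)))"
  proof (subst sum_PiE_fun_upd, simp, intro sum.cong refl)
    fix u x
    have "(\<Prod>i<m. \<pi> ((u(m := x)) i)) = (\<Prod>i<m. \<pi> (u i))" and "(u(m := x)) ` {..<m} = u ` {..<m}"
      by (auto intro!: prod.cong image_cong)
    then show "(\<Prod>i<Suc m. \<pi> ((u(m := x)) i)) * (if {1..n} \<subseteq> (u(m := x)) ` {..<m} then 0 else 1) =
               \<pi> x * ((\<Prod>i<m. \<pi> (u i)) * (if {1..n} \<subseteq> u ` {..<m} then 0 else 1))"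
      by (simp add: mult_ac)
  qed
  also have "\<dots> = (\<Sum>i=1..n. \<pi> i) * C_survival n \<pi> m"
    by (simp add: C_survival_def sum_distrib_left sum_distrib_right)
  finally show ?thesis .
qed

context
  fixes n :: nat and \<pi> :: "nat \<Rightarrow> real"
  assumes \<pi>_nonneg: "\<forall>i\<in>{1..n}. 0 \<le> \<pi> i"
begin

lemma prod_PiE_nonneg: "\<omega> \<in> {..<t} \<rightarrow>\<^sub>E {1..n} \<Longrightarrow> 0 \<le> (\<Prod>i<t. \<pi> (\<omega> i))"
  using \<pi>_nonneg by (intro prod_nonneg) (auto simp: PiE_iff)

lemma C_prob_nonneg: "0 \<le> C_prob n \<pi> t"
  unfolding C_prob_def using prod_PiE_nonneg by (intro sum_nonneg) auto

lemma C_survival_nonneg: "0 \<le> C_survival n \<pi> m"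
  unfolding C_survival_def using prod_PiE_nonneg by (intro sum_nonneg) auto

lemma C_prob_le_power: "C_prob n \<pi> t \<le> (\<Sum>i=1..n. \<pi> i) ^ t"
proof -
  have "C_prob n \<pi> t \<le> (\<Sum>\<omega>\<in>{..<t} \<rightarrow>\<^sub>E {1..n}. \<Prod>i<t. \<pi> (\<omega> i))"
    unfolding C_prob_def using prod_PiE_nonneg by (intro sum_mono) auto
  then show ?thesis by (simp add: sum_prod_PiE_eq_power)
qed

lemma C_survival_le_power: "C_survival n \<pi> m \<le> (\<Sum>i=1..n. \<pi> i) ^ m"
proof -
  have "C_survival n \<pi> m \<le> (\<Sum>\<omega>\<in>{..<m} \<rightarrow>\<^sub>E {1..n}. \<Prod>i<m. \<pi> (\<omega> i))"
    unfolding C_survival_def using prod_PiE_nonneg by (intro sum_mono) auto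
  then show ?thesis by (simp add: sum_prod_PiE_eq_power)
qed

end

lemma C_prob_pos:
  assumes "\<forall>i\<in>{1..n}. 0 < \<pi> i"
  shows "0 < C_prob n \<pi> n"
proof -
  define \<omega> where "\<omega> j = (if j < n then Suc j else undefined)" for j
  have \<omega>: "\<omega> \<in> {..<n} \<rightarrow>\<^sub>E {1..n}"
    by (auto simp: \<omega>_def PiE_iff extensional_def)
  have "\<omega> ` {..<s} = {1..s}" if "s \<le> n" for s
  proof -
    have "\<omega> ` {..<s} = Suc ` {..<s}"
      using that by (intro image_cong) (auto simp: \<omega>_def)
    then show ?thesis by (simp add: image_Suc_lessThan)
  qed
  then have "{1..n} \<subseteq> \<omega> ` {..<n} \<and> (\<forall>s<n. \<not> {1..n} \<subseteq> \<omega> ` {..<s})"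
    by auto
  moreover have "0 < (\<Prod>i<n. \<pi> (\<omega> i))"
    using assms by (intro prod_pos) (auto simp: \<omega>_def)
  ultimately show ?thesis
    unfolding C_prob_def using assms \<omega>
    by (intro sum_pos2[OF _ \<omega>] mult_nonneg_nonneg prod_nonneg) (auto simp: PiE_iff less_imp_le finite_PiE)
qed

lemma summable_norm_bounded_coeffs:
  fixes w :: "'a::real_normed_div_algebra"
  assumes "\<And>t. \<bar>c t\<bar> \<le> 1" and "norm w < 1"
  shows "summable (\<lambda>t. norm (of_real (c t) * w ^ t))"
proof (rule summable_comparison_test)
  show "\<exists>N. \<forall>t\<ge>N. norm (norm (of_real (c t) * w ^ t)) \<le> norm w ^ t"
    using assms(1) by (auto simp: norm_mult norm_power intro!: mult_left_le_one_le)
  show "summable (\<lambda>t. norm w ^ t)"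
    using assms(2) by (simp add: summable_geometric)
qed

context
  fixes n :: nat and \<pi> :: "nat \<Rightarrow> real"
  assumes \<pi>_nonneg: "\<forall>i\<in>{1..n}. 0 \<le> \<pi> i" and \<pi>_sum: "(\<Sum>i=1..n. \<pi> i) = 1"
begin

lemma abs_C_prob_le_1: "\<bar>C_prob n \<pi> t\<bar> \<le> 1"
  using C_prob_nonneg[OF \<pi>_nonneg] C_prob_le_power[OF \<pi>_nonneg] unfolding \<pi>_sum by simp

lemma abs_C_survival_le_1: "\<bar>C_survival n \<pi> m\<bar> \<le> 1"
  using C_survival_nonneg[OF \<pi>_nonneg] C_survival_le_power[OF \<pi>_nonneg] unfolding \<pi>_sum by simp

lemma C_pgf_sums:
  fixes w :: "'a::{real_normed_field,banach}"
  assumes "norm w < 1"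
  shows "(\<lambda>t. of_real (C_prob n \<pi> t) * w ^ t) sums C_pgf n \<pi> w"
  unfolding C_pgf_def
  by (rule summable_sums, rule summable_norm_cancel, rule summable_norm_bounded_coeffs)
     (use abs_C_prob_le_1 assms in auto)

lemma C_survival_sums:
  fixes w :: "'a::{real_normed_field,banach}"
  assumes "n \<ge> 1" and w: "norm w < 1"
  shows "(\<lambda>m. of_real (C_survival n \<pi> m) * w ^ m) sums ((1 - C_pgf n \<pi> w) / (1 - w))"
proof -
  define d where "d = (\<lambda>m. of_real (C_survival n \<pi> m) * w ^ m)"
  define H where "H = suminf d"
  have "d sums H"
    unfolding H_def d_def
    by (rule summable_sums, rule summable_norm_cancel, rule summable_norm_bounded_coeffs)
       (use abs_C_survival_le_1 w in auto)
  moreover have "(\<lambda>m. d (Suc m)) sums (H - d 0)"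
    using \<open>d sums H\<close> sums_Suc_iff[of d "H - d 0"] by simp
  ultimately have "(\<lambda>m. d m * w - d (Suc m)) sums (H * w - (H - d 0))"
    by (intro sums_diff sums_mult2)
  moreover have "d m * w - d (Suc m) = of_real (C_prob n \<pi> (Suc m)) * w ^ Suc m" for m
  proof -
    have "C_survival n \<pi> m = C_survival n \<pi> (Suc m) + C_prob n \<pi> (Suc m)"
      using C_prob_Suc_add_C_survival_Suc[of n \<pi> m] unfolding \<pi>_sum by linarith
    then show ?thesis
      unfolding d_def by (simp add: algebra_simps)
  qed
  moreover have "d 0 = 1"
    by (simp add: d_def C_survival_0[OF \<open>n \<ge> 1\<close>])
  ultimately have "(\<lambda>m. of_real (C_prob n \<pi> (Suc m)) * w ^ Suc m) sums (H * w - (H - 1))"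
    by simp
  moreover have "(\<lambda>m. of_real (C_prob n \<pi> (Suc m)) * w ^ Suc m) sums C_pgf n \<pi> w"
    using C_pgf_sums[OF w] sums_Suc_iff[of "\<lambda>t. of_real (C_prob n \<pi> t) * w ^ t"]
    by (simp add: C_prob_0[OF \<open>n \<ge> 1\<close>])
  ultimately have "C_pgf n \<pi> w = H * w - (H - 1)"
    by (rule sums_unique2[symmetric])
  moreover have "1 - w \<noteq> 0"
    using w by auto
  ultimately have "H = (1 - C_pgf n \<pi> w) / (1 - w)"
    by (simp add: field_simps)
  with \<open>d sums H\<close> show ?thesis
    by (simp add: d_def)
qed

end

lemma C_pgf_pos:
  fixes w :: real
  assumes \<pi>_pos: "\<forall>i\<in>{1..n}. 0 < \<pi> i" and \<pi>_sum: "(\<Sum>i=1..n. \<pi> i) = 1"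
    and "0 < w" and "w < 1"
  shows "0 < C_pgf n \<pi> w"
proof -
  have \<pi>_nonneg: "\<forall>i\<in>{1..n}. 0 \<le> \<pi> i"
    using \<pi>_pos by (simp add: less_imp_le)
  have "(\<lambda>t. C_prob n \<pi> t * w ^ t) sums C_pgf n \<pi> w"
    using C_pgf_sums[OF \<pi>_nonneg \<pi>_sum, of w] assms by simp
  moreover have "0 < (\<Sum>t. C_prob n \<pi> t * w ^ t)"
  proof (rule suminf_pos2)
    show "summable (\<lambda>t. C_prob n \<pi> t * w ^ t)"
      using \<open>(\<lambda>t. C_prob n \<pi> t * w ^ t) sums C_pgf n \<pi> w\<close> by (rule sums_summable)
    show "0 \<le> C_prob n \<pi> t * w ^ t" for t
      using C_prob_nonneg[OF \<pi>_nonneg] \<open>0 < w\<close> by simp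
    show "0 < C_prob n \<pi> n * w ^ n"
      using C_prob_pos[OF \<pi>_pos] \<open>0 < w\<close> by simp
  qed
  ultimately show ?thesis
    by (simp add: sums_iff)
qed

section \<open>Renewal equations\<close>

lemma renewal_summable:
  fixes a s f :: "nat \<Rightarrow> real"
  assumes renewal: "\<And>t. a t = s t + (\<Sum>k\<le>t. f k * a (t - k))"
    and a_nonneg: "\<And>t. 0 \<le> a t" and s_nonneg: "\<And>t. 0 \<le> s t" and f_nonneg: "\<And>t. 0 \<le> f t"
    and "summable s" and "f sums F" and "F < 1"
  shows "summable a"
proof (rule bounded_imp_summable[OF a_nonneg])
  fix N
  define P where "P = (\<Sum>t\<le>N. a t)"
  have "P = (\<Sum>t\<le>N. s t) + (\<Sum>t\<le>N. \<Sum>k\<le>t. f k * a (t - k))"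
    unfolding P_def sum.distrib[symmetric] by (rule sum.cong[OF refl renewal])
  also have "(\<Sum>t\<le>N. s t) \<le> suminf s"
    using \<open>summable s\<close> s_nonneg by (intro sum_le_suminf) auto
  also have "(\<Sum>t\<le>N. \<Sum>k\<le>t. f k * a (t - k)) = (\<Sum>(i, j)\<in>{(i, j). i + j \<le> N}. f i * a j)"
    by (rule sum.triangle_reindex_eq[symmetric])
  also have "\<dots> \<le> (\<Sum>(i, j)\<in>{..N} \<times> {..N}. f i * a j)"
    using f_nonneg a_nonneg by (intro sum_mono2) auto
  also have "\<dots> = (\<Sum>i\<le>N. f i) * P"
    by (simp add: P_def sum_product sum.cartesian_product)
  also have "\<dots> \<le> F * P"
    using \<open>f sums F\<close> f_nonneg a_nonneg unfolding P_def
    by (intro mult_right_mono sum_nonneg) (auto simp: sums_iff intro: sum_le_suminf)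
  finally have "P * (1 - F) \<le> suminf s"
    by (simp add: algebra_simps)
  then show "P \<le> suminf s / (1 - F)"
    using \<open>F < 1\<close> by (simp add: field_simps)
qed

lemma renewal_sums:
  fixes a s f :: "nat \<Rightarrow> 'a::{real_normed_field,banach}"
  assumes renewal: "\<And>t. a t = s t + (\<Sum>k\<le>t. f k * a (t - k))"
    and "summable (\<lambda>t. norm (a t))" and "summable (\<lambda>t. norm (f t))" and "suminf f \<noteq> 1"
  shows "a sums (suminf s / (1 - suminf f))"
proof -
  have "(\<lambda>t. \<Sum>k\<le>t. f k * a (t - k)) sums (suminf f * suminf a)"
    using assms(3,2) by (rule Cauchy_product_sums)
  moreover have "a sums suminf a"
    using assms(2) by (rule summable_sums[OF summable_norm_cancel])
  ultimately have "(\<lambda>t. a t - (\<Sum>k\<le>t. f k * a (t - k))) sums (suminf a - suminf f * suminf a)"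
    by (intro sums_diff)
  moreover have "a t - (\<Sum>k\<le>t. f k * a (t - k)) = s t" for t
    by (subst renewal[of t]) simp
  ultimately have "s sums (suminf a * (1 - suminf f))"
    by (simp add: algebra_simps)
  then have "suminf a = suminf s / (1 - suminf f)"
    using \<open>suminf f \<noteq> 1\<close> by (simp add: sums_iff field_simps)
  with \<open>a sums suminf a\<close> show ?thesis
    by simp
qed

lemma renewal_mult_power:
  fixes z :: "'a::real_normed_field"
  assumes "\<And>t. a t = s t + (\<Sum>k\<le>t. f k * a (t - k))"
  shows "of_real (a t) * z ^ t =
         of_real (s t) * z ^ t + (\<Sum>k\<le>t. (of_real (f k) * z ^ k) * (of_real (a (t - k)) * z ^ (t - k)))"
proof -
  have "of_real (a t) * z ^ t = of_real (s t) * z ^ t + (\<Sum>k\<le>t. of_real (f k * a (t - k)) * z ^ t)"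
    by (subst assms[of t]) (simp add: distrib_right sum_distrib_right)
  also have "(\<Sum>k\<le>t. of_real (f k * a (t - k)) * z ^ t) =
             (\<Sum>k\<le>t. (of_real (f k) * z ^ k) * (of_real (a (t - k)) * z ^ (t - k)))"
  proof (rule sum.cong[OF refl])
    fix k assume "k \<in> {..t}"
    then have "z ^ t = z ^ k * z ^ (t - k)"
      by (simp add: power_add[symmetric])
    then show "of_real (f k * a (t - k)) * z ^ t = (of_real (f k) * z ^ k) * (of_real (a (t - k)) * z ^ (t - k))"
      by (simp add: mult_ac)
  qed
  finally show ?thesis .
qed

lemma renewal_power_series_sums:
  fixes a s f :: "nat \<Rightarrow> real" and z :: "'a::{real_normed_field,banach}"
  assumes renewal: "\<And>t. a t = s t + (\<Sum>k\<le>t. f k * a (t - k))"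
    and a_nonneg: "\<And>t. 0 \<le> a t" and s_nonneg: "\<And>t. 0 \<le> s t" and f_nonneg: "\<And>t. 0 \<le> f t"
    and "norm z \<le> r" and "summable (\<lambda>t. s t * r ^ t)" and "(\<lambda>k. f k * r ^ k) sums F" and "F < 1"
  shows "(\<lambda>t. of_real (a t) * z ^ t) sums
           ((\<Sum>t. of_real (s t) * z ^ t) / (1 - (\<Sum>k. of_real (f k) * z ^ k)))"
proof (rule renewal_sums)
  have "0 \<le> r"
    using \<open>norm z \<le> r\<close> norm_ge_zero order_trans by blast
  have norm_le: "norm (of_real (c t) * z ^ t) \<le> c t * r ^ t" if "0 \<le> c t" for c :: "nat \<Rightarrow> real" and t
    unfolding norm_mult norm_power norm_of_real
    using that \<open>norm z \<le> r\<close> by (simp add: mult_left_mono power_mono)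
  have "a t * r ^ t = s t * r ^ t + (\<Sum>k\<le>t. (f k * r ^ k) * (a (t - k) * r ^ (t - k)))" for t
    using renewal_mult_power[OF renewal, where t = t and z = r] by simp
  then have "summable (\<lambda>t. a t * r ^ t)"
    by (rule renewal_summable[where F = F])
       (use a_nonneg s_nonneg f_nonneg \<open>0 \<le> r\<close> assms(6-8) in simp_all)
  then show "summable (\<lambda>t. norm (of_real (a t) * z ^ t))"
    using norm_le a_nonneg by (intro summable_comparison_test[OF _ \<open>summable (\<lambda>t. a t * r ^ t)\<close>]) auto
  have f_norm_summable: "summable (\<lambda>k. norm (of_real (f k) * z ^ k))"
    using norm_le f_nonneg
    by (intro summable_comparison_test[OF _ sums_summable[OF \<open>(\<lambda>k. f k * r ^ k) sums F\<close>]]) auto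
  then show "summable (\<lambda>k. norm (of_real (f k) * z ^ k))" .
  have "norm (\<Sum>k. of_real (f k) * z ^ k) \<le> (\<Sum>k. norm (of_real (f k) * z ^ k))"
    using f_norm_summable by (rule summable_norm)
  also have "\<dots> \<le> F"
    using norm_le f_nonneg
    by (intro sums_le[OF _ summable_sums[OF f_norm_summable] \<open>(\<lambda>k. f k * r ^ k) sums F\<close>]) auto
  finally show "(\<Sum>k. of_real (f k) * z ^ k) \<noteq> 1"
    using \<open>F < 1\<close> by auto
qed (rule renewal_mult_power[OF renewal])

section \<open>The first-reset decomposition\<close>

lemma reset_collected_cong:
  "(\<And>j. j < s \<Longrightarrow> \<omega> j = \<omega>' j) \<Longrightarrow> reset_collected \<omega> s = reset_collected \<omega>' s"
  unfolding reset_collected_def by (intro Collect_cong) (metis order.strict_trans)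

lemma reset_collected_reset_free:
  "(\<And>j. j < s \<Longrightarrow> \<omega> j \<noteq> 0) \<Longrightarrow> reset_collected \<omega> s = \<omega> ` {..<s}"
  unfolding reset_collected_def by auto

lemma reset_collected_after_reset:
  "reset_collected (splice a u 0 y) (Suc (a + s)) = reset_collected y s"
proof (intro set_eqI iffI)
  fix x
  assume "x \<in> reset_collected (splice a u 0 y) (Suc (a + s))"
  then obtain j where j: "x = splice a u 0 y j" "j < Suc (a + s)" "splice a u 0 y j \<noteq> 0"
    and no_reset: "\<And>l. j < l \<Longrightarrow> l < Suc (a + s) \<Longrightarrow> splice a u 0 y l \<noteq> 0"
    unfolding reset_collected_def by blast
  have "a < j"
    using j(3) no_reset[of a] by (cases "j < a") (auto simp: not_less_iff_gr_or_eq)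
  then obtain j' where j': "j = Suc (a + j')"
    using less_imp_Suc_add by blast
  have "y l \<noteq> 0" if "j' < l" "l < s" for l
    using no_reset[of "Suc (a + l)"] that j' by simp
  with j j' show "x \<in> reset_collected y s"
    unfolding reset_collected_def by auto
next
  fix x
  assume "x \<in> reset_collected y s"
  then obtain j where j: "x = y j" "j < s" "y j \<noteq> 0" and no_reset: "\<And>l. j < l \<Longrightarrow> l < s \<Longrightarrow> y l \<noteq> 0"
    unfolding reset_collected_def by blast
  have "splice a u 0 y l \<noteq> 0" if "Suc (a + j) < l" "l < Suc (a + s)" for l
  proof -
    obtain l' where "l = Suc (a + l')"
      using \<open>Suc (a + j) < l\<close> less_imp_Suc_add by fastforce
    with that show ?thesis
      using no_reset[of l'] by simp
  qed
  with j show "x \<in> reset_collected (splice a u 0 y) (Suc (a + s))"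
    unfolding reset_collected_def by (auto intro!: exI[of _ "Suc (a + j)"])
qed

lemma reset_first_complete_reset_free:
  "(\<And>j. j < t \<Longrightarrow> \<omega> j \<noteq> 0) \<Longrightarrow>
   reset_first_complete n \<omega> t \<longleftrightarrow> {1..n} \<subseteq> \<omega> ` {..<t} \<and> (\<forall>s<t. \<not> {1..n} \<subseteq> \<omega> ` {..<s})"
  unfolding reset_first_complete_def by (simp add: reset_collected_reset_free)

lemma reset_first_complete_after_reset:
  assumes "\<And>j. j < a \<Longrightarrow> u j \<noteq> 0"
  shows "reset_first_complete n (splice a u 0 y) (a + Suc m) \<longleftrightarrow>
         \<not> {1..n} \<subseteq> u ` {..<a} \<and> reset_first_complete n y m"
proof -
  let ?\<omega> = "splice a u 0 y"
  have before: "reset_collected ?\<omega> s = u ` {..<s}" if "s < Suc a" for s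
  proof -
    have "reset_collected ?\<omega> s = reset_collected u s"
      using that by (intro reset_collected_cong) simp
    also have "\<dots> = u ` {..<s}"
      using that assms by (intro reset_collected_reset_free) simp
    finally show ?thesis .
  qed
  have split: "(\<forall>s<a + Suc m. Q s) \<longleftrightarrow> (\<forall>s<Suc a. Q s) \<and> (\<forall>s<m. Q (Suc (a + s)))" for Q
  proof
    assume "(\<forall>s<Suc a. Q s) \<and> (\<forall>s<m. Q (Suc (a + s)))"
    moreover have "s < Suc a \<or> (\<exists>s'<m. s = Suc (a + s'))" if "s < a + Suc m" for s
      using that less_imp_Suc_add[of a s] by (cases "s < Suc a") auto
    ultimately show "\<forall>s<a + Suc m. Q s"
      by blast
  qed auto
  have before_iff: "(\<forall>s<Suc a. \<not> {1..n} \<subseteq> reset_collected ?\<omega> s) \<longleftrightarrow> \<not> {1..n} \<subseteq> u ` {..<a}"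
    using before not_covered_before_Suc_iff[of a "{1..n}" u] by simp
  have "reset_collected ?\<omega> (a + Suc m) = reset_collected y m"
    using reset_collected_after_reset[of a u y m] by simp
  then show ?thesis
    unfolding reset_first_complete_def split before_iff reset_collected_after_reset by blast
qed

lemma first_zero_indicator:
  fixes \<omega> :: "nat \<Rightarrow> nat"
  shows "(if \<forall>j<t. \<omega> j \<noteq> 0 then 1 else 0) +
         (\<Sum>a<t. if \<omega> a = 0 \<and> (\<forall>j<a. \<omega> j \<noteq> 0) then 1 else 0) = (1::real)"
proof (cases "\<forall>j<t. \<omega> j \<noteq> 0")
  case True
  then show ?thesis
    by (auto intro!: sum.neutral)
next
  case False
  then obtain j where "j < t" "\<omega> j = 0"
    by auto
  define a\<^sub>0 where "a\<^sub>0 = (LEAST j. \<omega> j = 0)"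
  have "a\<^sub>0 \<le> j" "\<omega> a\<^sub>0 = 0"
    unfolding a\<^sub>0_def using \<open>\<omega> j = 0\<close> by (auto intro: Least_le LeastI)
  moreover have "\<omega> a = 0 \<and> (\<forall>j<a. \<omega> j \<noteq> 0) \<longleftrightarrow> a = a\<^sub>0" for a
  proof
    assume "\<omega> a = 0 \<and> (\<forall>j<a. \<omega> j \<noteq> 0)"
    moreover have "a\<^sub>0 \<le> a"
      unfolding a\<^sub>0_def using calculation by (auto intro: Least_le)
    ultimately show "a = a\<^sub>0"
      using \<open>\<omega> a\<^sub>0 = 0\<close> by (auto simp: order.order_iff_strict)
  next
    assume "a = a\<^sub>0"
    then show "\<omega> a = 0 \<and> (\<forall>j<a. \<omega> j \<noteq> 0)"
      using \<open>\<omega> a\<^sub>0 = 0\<close> not_less_Least unfolding a\<^sub>0_def by blast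
  qed
  ultimately show ?thesis
    using False \<open>j < t\<close> by simp
qed

lemma T_prob_reset_free_part:
  "(\<Sum>\<omega>\<in>{..<t} \<rightarrow>\<^sub>E {0..n}. (\<Prod>i<t. if \<omega> i = 0 then \<rho> else p (\<omega> i)) *
      (if reset_first_complete n \<omega> t then 1 else 0) * (if \<forall>j<t. \<omega> j \<noteq> 0 then 1 else 0)) = C_prob n p t"
proof -
  have "(\<Sum>\<omega>\<in>{..<t} \<rightarrow>\<^sub>E {0..n}. (\<Prod>i<t. if \<omega> i = 0 then \<rho> else p (\<omega> i)) *
          (if reset_first_complete n \<omega> t then 1 else 0) * (if \<forall>j<t. \<omega> j \<noteq> 0 then 1 else 0)) =
        (\<Sum>\<omega>\<in>{..<t} \<rightarrow>\<^sub>E {0..n}. if \<forall>j<t. \<omega> j \<noteq> 0 then (\<Prod>i<t. if \<omega> i = 0 then \<rho> else p (\<omega> i)) *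
          (if reset_first_complete n \<omega> t then 1 else 0) else 0)"
    by (intro sum.cong refl) (simp only: mult.right_neutral mult_zero_right if_distrib[of "(*) _"])
  also have "\<dots> = (\<Sum>\<omega>\<in>{..<t} \<rightarrow>\<^sub>E {1..n}. (\<Prod>i<t. if \<omega> i = 0 then \<rho> else p (\<omega> i)) *
          (if reset_first_complete n \<omega> t then 1 else 0))"
    by (rule sum_PiE_nonzero)
  also have "\<dots> = C_prob n p t"
    unfolding C_prob_def
  proof (rule sum.cong[OF refl])
    fix \<omega> assume "\<omega> \<in> {..<t} \<rightarrow>\<^sub>E {1..n}"
    then have nonzero: "\<And>j. j < t \<Longrightarrow> \<omega> j \<noteq> 0"
      by (force simp: PiE_iff)
    have "(\<Prod>i<t. if \<omega> i = 0 then \<rho> else p (\<omega> i)) = (\<Prod>i<t. p (\<omega> i))"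
      by (intro prod.cong refl) (simp add: nonzero)
    then show "(\<Prod>i<t. if \<omega> i = 0 then \<rho> else p (\<omega> i)) * (if reset_first_complete n \<omega> t then 1 else 0) =
        (\<Prod>i<t. p (\<omega> i)) * (if {1..n} \<subseteq> \<omega> ` {..<t} \<and> (\<forall>s<t. \<not> {1..n} \<subseteq> \<omega> ` {..<s}) then 1 else 0)"
      by (simp add: reset_first_complete_reset_free[OF nonzero])
  qed
  finally show ?thesis .
qed

lemma C_survival_eq_sum_reset_free:
  "C_survival n p a =
     (\<Sum>u\<in>{..<a} \<rightarrow>\<^sub>E {0..n}. if \<forall>j<a. u j \<noteq> 0
        then (\<Prod>i<a. if u i = 0 then \<rho> else p (u i)) * (if {1..n} \<subseteq> u ` {..<a} then 0 else 1) else 0)"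
  unfolding sum_PiE_nonzero C_survival_def
proof (rule sum.cong[OF refl])
  fix u assume "u \<in> {..<a} \<rightarrow>\<^sub>E {1..n}"
  then have "(\<Prod>i<a. if u i = 0 then \<rho> else p (u i)) = (\<Prod>i<a. p (u i))"
    by (intro prod.cong refl) (force simp: PiE_iff)
  then show "(\<Prod>i<a. p (u i)) * (if {1..n} \<subseteq> u ` {..<a} then 0 else 1) =
             (\<Prod>i<a. if u i = 0 then \<rho> else p (u i)) * (if {1..n} \<subseteq> u ` {..<a} then 0 else 1)"
    by simp
qed

lemma T_prob_first_reset_part:
  "(\<Sum>\<omega>\<in>{..<a + Suc m} \<rightarrow>\<^sub>E {0..n}. (\<Prod>i<a + Suc m. if \<omega> i = 0 then \<rho> else p (\<omega> i)) *
      (if reset_first_complete n \<omega> (a + Suc m) then 1 else 0) *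
      (if \<omega> a = 0 \<and> (\<forall>j<a. \<omega> j \<noteq> 0) then 1 else 0))
   = \<rho> * C_survival n p a * T_prob n \<rho> p m"
proof -
  define h where "h x = (if x = 0 then \<rho> else p x)" for x
  define G where "G u = (\<Prod>i<a. h (u i)) * (if {1..n} \<subseteq> u ` {..<a} then 0 else 1)" for u
  define V where "V y = (\<Prod>i<m. h (y i)) * (if reset_first_complete n y m then 1 else 0)" for y
  have summand: "(\<Prod>i<a + Suc m. h (splice a u x y i)) *
      (if reset_first_complete n (splice a u x y) (a + Suc m) then 1 else 0) *
      (if splice a u x y a = 0 \<and> (\<forall>j<a. splice a u x y j \<noteq> 0) then 1 else 0) =
      (if x = 0 then (if \<forall>j<a. u j \<noteq> 0 then G u else 0) * \<rho> * V y else 0)" for u x y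
  proof (cases "x = 0 \<and> (\<forall>j<a. u j \<noteq> 0)")
    case True
    then have "(\<Prod>i<a + Suc m. h (splice a u x y i)) = (\<Prod>i<a. h (u i)) * \<rho> * (\<Prod>i<m. h (y i))"
      unfolding prod_splice by (simp add: h_def)
    moreover have "reset_first_complete n (splice a u x y) (a + Suc m) \<longleftrightarrow>
                   \<not> {1..n} \<subseteq> u ` {..<a} \<and> reset_first_complete n y m"
      using True reset_first_complete_after_reset[of a u n y m] by simp
    ultimately show ?thesis
      using True by (simp add: G_def V_def)
  qed auto
  have "(\<Sum>\<omega>\<in>{..<a + Suc m} \<rightarrow>\<^sub>E {0..n}. (\<Prod>i<a + Suc m. h (\<omega> i)) *
          (if reset_first_complete n \<omega> (a + Suc m) then 1 else 0) *
          (if \<omega> a = 0 \<and> (\<forall>j<a. \<omega> j \<noteq> 0) then 1 else 0)) =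
        (\<Sum>u\<in>{..<a} \<rightarrow>\<^sub>E {0..n}. \<Sum>x\<in>{0..n}. \<Sum>y\<in>{..<m} \<rightarrow>\<^sub>E {0..n}.
          if x = 0 then (if \<forall>j<a. u j \<noteq> 0 then G u else 0) * \<rho> * V y else 0)"
    by (simp only: sum_PiE_splice[OF finite_atLeastAtMost] summand)
  also have "\<dots> = (\<Sum>u\<in>{..<a} \<rightarrow>\<^sub>E {0..n}. \<Sum>y\<in>{..<m} \<rightarrow>\<^sub>E {0..n}.
                     (if \<forall>j<a. u j \<noteq> 0 then G u else 0) * \<rho> * V y)"
    by (intro sum.cong refl, subst sum.swap) simp
  also have "\<dots> = (\<Sum>u\<in>{..<a} \<rightarrow>\<^sub>E {0..n}. if \<forall>j<a. u j \<noteq> 0 then G u else 0) * \<rho> *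
                   (\<Sum>y\<in>{..<m} \<rightarrow>\<^sub>E {0..n}. V y)"
    by (simp only: sum_product[symmetric] sum_distrib_right[symmetric])
  also have "(\<Sum>u\<in>{..<a} \<rightarrow>\<^sub>E {0..n}. if \<forall>j<a. u j \<noteq> 0 then G u else 0) = C_survival n p a"
    unfolding G_def h_def by (rule C_survival_eq_sum_reset_free[symmetric])
  also have "(\<Sum>y\<in>{..<m} \<rightarrow>\<^sub>E {0..n}. V y) = T_prob n \<rho> p m"
    by (simp add: V_def h_def T_prob_def)
  finally show ?thesis
    by (simp add: h_def mult_ac)
qed

definition reset_before_completion :: "nat \<Rightarrow> real \<Rightarrow> (nat \<Rightarrow> real) \<Rightarrow> nat \<Rightarrow> real" where
  "reset_before_completion n \<rho> p k = (if k = 0 then 0 else \<rho> * C_survival n p (k - 1))"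

lemma T_prob_renewal:
  "T_prob n \<rho> p t =
     C_prob n p t + (\<Sum>k\<le>t. reset_before_completion n \<rho> p k * T_prob n \<rho> p (t - k))"
proof -
  define W where "W \<omega> = (\<Prod>i<t. if \<omega> i = 0 then \<rho> else p (\<omega> i)) *
                          (if reset_first_complete n \<omega> t then 1 else 0)" for \<omega> :: "nat \<Rightarrow> nat"
  have "T_prob n \<rho> p t = (\<Sum>\<omega>\<in>{..<t} \<rightarrow>\<^sub>E {0..n}. W \<omega> *
          ((if \<forall>j<t. \<omega> j \<noteq> 0 then 1 else 0) + (\<Sum>a<t. if \<omega> a = 0 \<and> (\<forall>j<a. \<omega> j \<noteq> 0) then 1 else 0)))"
    unfolding first_zero_indicator mult.right_neutral T_prob_def W_def ..
  also have "\<dots> = (\<Sum>\<omega>\<in>{..<t} \<rightarrow>\<^sub>E {0..n}. W \<omega> * (if \<forall>j<t. \<omega> j \<noteq> 0 then 1 else 0)) +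
      (\<Sum>a<t. \<Sum>\<omega>\<in>{..<t} \<rightarrow>\<^sub>E {0..n}. W \<omega> * (if \<omega> a = 0 \<and> (\<forall>j<a. \<omega> j \<noteq> 0) then 1 else 0))"
    by (simp add: distrib_left sum.distrib sum_distrib_left sum.swap[where A = "{..<t}"])
  also have "(\<Sum>\<omega>\<in>{..<t} \<rightarrow>\<^sub>E {0..n}. W \<omega> * (if \<forall>j<t. \<omega> j \<noteq> 0 then 1 else 0)) = C_prob n p t"
    unfolding W_def by (rule T_prob_reset_free_part)
  also have "(\<Sum>a<t. \<Sum>\<omega>\<in>{..<t} \<rightarrow>\<^sub>E {0..n}. W \<omega> * (if \<omega> a = 0 \<and> (\<forall>j<a. \<omega> j \<noteq> 0) then 1 else 0)) =
             (\<Sum>a<t. \<rho> * C_survival n p a * T_prob n \<rho> p (t - Suc a))"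
  proof (rule sum.cong[OF refl])
    fix a assume "a \<in> {..<t}"
    then have "t = a + Suc (t - Suc a)"
      by simp
    then show "(\<Sum>\<omega>\<in>{..<t} \<rightarrow>\<^sub>E {0..n}. W \<omega> * (if \<omega> a = 0 \<and> (\<forall>j<a. \<omega> j \<noteq> 0) then 1 else 0)) =
               \<rho> * C_survival n p a * T_prob n \<rho> p (t - Suc a)"
      using T_prob_first_reset_part[where a = a and m = "t - Suc a"] unfolding W_def by simp
  qed
  also have "(\<Sum>a<t. \<rho> * C_survival n p a * T_prob n \<rho> p (t - Suc a)) =
             (\<Sum>k\<le>t. reset_before_completion n \<rho> p k * T_prob n \<rho> p (t - k))"
    by (simp add: sum.atMost_shift reset_before_completion_def)
  finally show ?thesis .
qed

section \<open>Generating function of the completion time\<close>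

lemma T_prob_nonneg: "0 \<le> \<rho> \<Longrightarrow> \<forall>i\<in>{1..n}. 0 \<le> p i \<Longrightarrow> 0 \<le> T_prob n \<rho> p t"
  unfolding T_prob_def by (intro sum_nonneg mult_nonneg_nonneg prod_nonneg) (auto simp: PiE_iff)

locale reset_collector =
  fixes n :: nat and \<rho> :: real and p :: "nat \<Rightarrow> real"
  assumes n_ge_1: "n \<ge> 1" and \<rho>_pos: "0 < \<rho>" and \<rho>_less_1: "\<rho> < 1"
    and p_pos: "\<forall>i\<in>{1..n}. p i > 0" and p_sum: "(\<Sum>i=1..n. p i) = 1 - \<rho>"
begin

abbreviation q :: real where "q \<equiv> 1 - \<rho>"

abbreviation \<pi> :: "nat \<Rightarrow> real" where "\<pi> \<equiv> \<lambda>i. p i / q"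

lemma p_nonneg: "\<forall>i\<in>{1..n}. 0 \<le> p i"
  using p_pos by (simp add: less_imp_le)

lemma \<pi>_pos: "\<forall>i\<in>{1..n}. 0 < \<pi> i"
  using p_pos \<rho>_less_1 by simp

lemma \<pi>_nonneg: "\<forall>i\<in>{1..n}. 0 \<le> \<pi> i"
  using \<pi>_pos by (simp add: less_imp_le)

lemma \<pi>_sum: "(\<Sum>i=1..n. \<pi> i) = 1"
  using p_sum \<rho>_less_1 by (simp add: sum_divide_distrib[symmetric])

lemma completion_sums:
  fixes w :: "'a::{real_normed_field,banach}"
  assumes "norm (of_real q * w) < 1"
  shows "(\<lambda>t. of_real (C_prob n p t) * w ^ t) sums C_pgf n \<pi> (of_real q * w)"
proof -
  have "C_prob n p t = q ^ t * C_prob n \<pi> t" for t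
    using \<rho>_less_1 by (simp add: C_prob_divide)
  then have "of_real (C_prob n p t) * w ^ t = of_real (C_prob n \<pi> t) * (of_real q * w) ^ t" for t
    by (simp add: power_mult_distrib mult_ac)
  then show ?thesis
    using C_pgf_sums[OF \<pi>_nonneg \<pi>_sum assms] by simp
qed

lemma reset_before_completion_sums:
  fixes w :: "'a::{real_normed_field,banach}"
  assumes "norm (of_real q * w) < 1"
  shows "(\<lambda>k. of_real (reset_before_completion n \<rho> p k) * w ^ k) sums
           (of_real \<rho> * w * ((1 - C_pgf n \<pi> (of_real q * w)) / (1 - of_real q * w)))"
proof -
  have shift: "of_real (reset_before_completion n \<rho> p (Suc m)) * w ^ Suc m =
        of_real \<rho> * w * (of_real (C_survival n \<pi> m) * (of_real q * w) ^ m)" for m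
  proof -
    have "C_survival n p m = q ^ m * C_survival n \<pi> m"
      using \<rho>_less_1 by (simp add: C_survival_divide)
    then show ?thesis
      by (simp add: reset_before_completion_def power_mult_distrib mult_ac del: of_real_diff)
  qed
  have "(\<lambda>m. of_real \<rho> * w * (of_real (C_survival n \<pi> m) * (of_real q * w) ^ m)) sums
                 (of_real \<rho> * w * ((1 - C_pgf n \<pi> (of_real q * w)) / (1 - of_real q * w)))"
    by (intro sums_mult C_survival_sums[OF \<pi>_nonneg \<pi>_sum n_ge_1 assms])
  then have "(\<lambda>m. of_real (reset_before_completion n \<rho> p (Suc m)) * w ^ Suc m) sums
                 (of_real \<rho> * w * ((1 - C_pgf n \<pi> (of_real q * w)) / (1 - of_real q * w)))"
    unfolding shift .
  then show ?thesis
    using sums_Suc_iff[where f = "\<lambda>k. of_real (reset_before_completion n \<rho> p k) * w ^ k"]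
    by (simp add: reset_before_completion_def del: of_real_diff)
qed

lemma norm_q_mult_less_1:
  fixes z :: "'a::real_normed_div_algebra"
  assumes "norm z \<le> r" and "q * r < 1"
  shows "norm (of_real q * z) < 1"
proof -
  have "norm (of_real q * z) = q * norm z"
    using \<rho>_less_1 by (simp only: norm_mult norm_of_real)
  also have "\<dots> \<le> q * r"
    using \<open>norm z \<le> r\<close> \<rho>_less_1 by (simp add: mult_left_mono)
  finally show ?thesis
    using \<open>q * r < 1\<close> by simp
qed

lemma T_pgf_sums_renewal:
  fixes z :: "'a::{real_normed_field,banach}"
  assumes "norm z \<le> r" and "q * r < 1" and "0 < 1 - r + \<rho> * r * C_pgf n \<pi> (q * r)"
  shows "(\<lambda>t. of_real (T_prob n \<rho> p t) * z ^ t) sums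
           ((\<Sum>t. of_real (C_prob n p t) * z ^ t) /
            (1 - (\<Sum>k. of_real (reset_before_completion n \<rho> p k) * z ^ k)))"
proof -
  have "0 \<le> r"
    using \<open>norm z \<le> r\<close> norm_ge_zero order_trans by blast
  then have "\<bar>q * r\<bar> < 1"
    using \<open>q * r < 1\<close> \<rho>_less_1 by simp
  define F where "F = \<rho> * r * ((1 - C_pgf n \<pi> (q * r)) / (1 - q * r))"
  have "1 - F = (1 - r + \<rho> * r * C_pgf n \<pi> (q * r)) / (1 - q * r)"
    using \<open>q * r < 1\<close> by (simp add: F_def field_simps)
  also have "\<dots> > 0"
    using \<open>q * r < 1\<close> assms(3) by (intro divide_pos_pos) simp_all
  finally have "F < 1"
    by simp
  show ?thesis
  proof (rule renewal_power_series_sums[OF T_prob_renewal _ _ _ \<open>norm z \<le> r\<close> _ _ \<open>F < 1\<close>])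
    show "0 \<le> T_prob n \<rho> p t" "0 \<le> C_prob n p t" "0 \<le> reset_before_completion n \<rho> p t" for t
      using T_prob_nonneg[OF _ p_nonneg] C_prob_nonneg[OF p_nonneg] C_survival_nonneg[OF p_nonneg] \<rho>_pos
      by (simp_all add: reset_before_completion_def)
    show "summable (\<lambda>t. C_prob n p t * r ^ t)"
      using completion_sums[of r] \<open>\<bar>q * r\<bar> < 1\<close> by (simp add: sums_summable)
    show "(\<lambda>k. reset_before_completion n \<rho> p k * r ^ k) sums F"
      using reset_before_completion_sums[of r] \<open>\<bar>q * r\<bar> < 1\<close> by (simp add: F_def)
  qed
qed

lemma T_pgf_sums:
  fixes z :: "'a::{real_normed_field,banach}"
  assumes "norm z \<le> r" and "q * r < 1" and "0 < 1 - r + \<rho> * r * C_pgf n \<pi> (q * r)"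
  shows "(\<lambda>t. of_real (T_prob n \<rho> p t) * z ^ t) sums
           ((1 - of_real q * z) * C_pgf n \<pi> (of_real q * z) /
            (1 - z + of_real \<rho> * z * C_pgf n \<pi> (of_real q * z)))"
proof -
  have qz: "norm (of_real q * z) < 1"
    using assms(1,2) by (rule norm_q_mult_less_1)
  define \<Phi> where "\<Phi> = C_pgf n \<pi> (of_real q * z)"
  have completion: "(\<Sum>t. of_real (C_prob n p t) * z ^ t) = \<Phi>"
    using completion_sums[OF qz] unfolding \<Phi>_def[symmetric] by (rule sums_unique[symmetric])
  have reset: "(\<Sum>k. of_real (reset_before_completion n \<rho> p k) * z ^ k) =
               of_real \<rho> * z * ((1 - \<Phi>) / (1 - of_real q * z))"
    using reset_before_completion_sums[OF qz] unfolding \<Phi>_def[symmetric] by (rule sums_unique[symmetric])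
  have "1 - of_real q * z \<noteq> 0"
    using qz by auto
  then have "1 - of_real \<rho> * z * ((1 - \<Phi>) / (1 - of_real q * z)) =
             (1 - z + of_real \<rho> * z * \<Phi>) / (1 - of_real q * z)"
    by (simp add: field_simps)
  then have "(\<Sum>t. of_real (C_prob n p t) * z ^ t) / (1 - (\<Sum>k. of_real (reset_before_completion n \<rho> p k) * z ^ k)) =
             (1 - of_real q * z) * \<Phi> / (1 - z + of_real \<rho> * z * \<Phi>)"
    unfolding completion reset by (simp add: mult.commute)
  with T_pgf_sums_renewal[OF assms] show ?thesis
    unfolding \<Phi>_def by simp
qed

end

theorem mainTheorem9:
  fixes n :: nat and \<rho> :: real and p :: "nat \<Rightarrow> real"
  assumes "n \<ge> 1" and "0 < \<rho>" and "\<rho> < 1"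
    and "\<forall>i\<in>{1..n}. p i > 0"
    and "(\<Sum>i=1..n. p i) = 1 - \<rho>"
  shows "(\<forall>z::complex. norm z \<le> 1 \<longrightarrow>
           (\<lambda>t. of_real (T_prob n \<rho> p t) * z ^ t) sums
             ((1 - of_real (1 - \<rho>) * z) * C_pgf n (\<lambda>i. p i / (1 - \<rho>)) (of_real (1 - \<rho>) * z) /
              (1 - z + of_real \<rho> * z * C_pgf n (\<lambda>i. p i / (1 - \<rho>)) (of_real (1 - \<rho>) * z))))
       \<and> (\<forall>z::real. 0 \<le> z \<and> (1 - \<rho>) * z < 1 \<and>
             1 - z + \<rho> * z * C_pgf n (\<lambda>i. p i / (1 - \<rho>)) ((1 - \<rho>) * z) > 0 \<longrightarrow>
           (\<lambda>t. T_prob n \<rho> p t * z ^ t) sums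
             ((1 - (1 - \<rho>) * z) * C_pgf n (\<lambda>i. p i / (1 - \<rho>)) ((1 - \<rho>) * z) /
              (1 - z + \<rho> * z * C_pgf n (\<lambda>i. p i / (1 - \<rho>)) ((1 - \<rho>) * z))))"
proof -
  interpret reset_collector n \<rho> p
    using assms by unfold_locales
  have "0 < C_pgf n \<pi> q"
    using C_pgf_pos[OF \<pi>_pos \<pi>_sum] assms(2,3) by simp
  then have "0 < 1 - 1 + \<rho> * 1 * C_pgf n \<pi> (q * 1)"
    using assms(2) by simp
  then have unit_disc: "(\<lambda>t. of_real (T_prob n \<rho> p t) * z ^ t) sums
      ((1 - of_real q * z) * C_pgf n \<pi> (of_real q * z) / (1 - z + of_real \<rho> * z * C_pgf n \<pi> (of_real q * z)))"
    if "norm z \<le> 1" for z :: complex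
    using T_pgf_sums[of z 1] that assms(2) by simp
  have "(\<lambda>t. T_prob n \<rho> p t * z ^ t) sums
      ((1 - q * z) * C_pgf n \<pi> (q * z) / (1 - z + \<rho> * z * C_pgf n \<pi> (q * z)))"
    if "0 \<le> z" "q * z < 1" "0 < 1 - z + \<rho> * z * C_pgf n \<pi> (q * z)" for z :: real
    using T_pgf_sums[of z z] that by simp
  with unit_disc show ?thesis
    by blast
qed

end
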